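(* The optimal control at time step $k$, i.e. the first element of the control sequence minimizing $J_k=\sum_{i=k}^{\infty}\gamma^{i-k}\tfrac12\big((x_i-r_i)^\top Q(x_i-r_i)+u_i^\top R u_i\big)$ subject to $x_{i+1}=Ax_i+Bu_i$, is $$u_k^*=-h_{uu}^{-1}\begin{bmatrix}h_{ux} & h_{ur_1} & \cdots & h_{ur_N}\end{bmatrix}\begin{bmatrix}x_k\\ r_{k+1}\\ \vdots\\ r_{k+N}\end{bmatrix}.$$
   Context: Consider $x_{i+1}=Ax_i+Bu_i$, $x_i\in\mathbb{R}^n$, $u_i\in\mathbb{R}^m$, $(A,B)$ controllable. Fix $k$ and $N\in\mathbb{N}$; references $r_i\in\mathbb{R}^n$ are given for $i=k,\dots,k+N$ and $r_i=0$ for $i>k+N$. The one-step cost is $c_i=\tfrac12\big((x_i-r_i)^\top Q(x_i-r_i)+u_i^\top Ru_i\big)$ with $Q=Q^\top\succeq0$, $R=R^\top\succ0$, $\gamma\in[0,1)$. For horizon $K$, the reference-dependent Q-function is ${}^{K}Q_K=c(x_{k+K},u_{k+K},r_{k+K})$ and ${}^{K}Q_\kappa=c_{k+\kappa}+\gamma\,{}^{K}Q_{\kappa+1}|_{u_{k+\kappa+1}=u^*_{k+\kappa+1}}$ ($0\le\kappa<K$), with $u^*_{k+\kappa+1}$ the minimizer of ${}^{K}Q_{\kappa+1}$. For $K\ge N$ one has ${}^{K}Q_0=\tfrac12[x_k^\top,u_k^\top,r_k^\top,\dots,r_{k+N}^\top,0^\top]H_K[\cdot]$ with a symmetric matrix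 $H_K$ independent of $x_k,u_k$ and the references. In the setting, $Q_0:=\lim_{K\to\infty}{}^{K}Q_0=\tfrac12 z_k^\top H z_k$ where $z_k=[x_k^\top,u_k^\top,r_k^\top,\dots,r_{k+N}^\top]^\top$ and $H$ is the leading $((N+2)n+m)\times((N+2)n+m)$ submatrix of the limit of $H_K$. $H$ is partitioned into blocks $h_{ab}$, $a,b\in\{x,u,r_0,\dots,r_N\}$, of sizes $n,m,n,\dots,n$; in particular $h_{ur_0}=0$. *)

theory Defs
  imports "HOL-Analysis.Analysis"
begin

definition mat_pow :: "real^'n^'n \<Rightarrow> nat \<Rightarrow> real^'n^'n" where
  "mat_pow A i = (((**) A) ^^ i) (mat 1)"

definition controllable :: "real^'n^'n \<Rightarrow> real^'m^'n \<Rightarrow> bool" where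
  "controllable A B \<longleftrightarrow>
     (\<forall>y::real^'n. \<exists>v::nat \<Rightarrow> real^'m. y = (\<Sum>i<CARD('n). mat_pow A i *v (B *v v i)))"

definition psd :: "real^'n^'n \<Rightarrow> bool" where
  "psd M \<longleftrightarrow> transpose M = M \<and> (\<forall>x. 0 \<le> x \<bullet> (M *v x))"

definition pd :: "real^'n^'n \<Rightarrow> bool" where
  "pd M \<longleftrightarrow> transpose M = M \<and> (\<forall>x. x \<noteq> 0 \<longrightarrow> 0 < x \<bullet> (M *v x))"

definition stage_cost :: "real^'n^'n \<Rightarrow> real^'m^'m \<Rightarrow> real^'n \<Rightarrow> real^'m \<Rightarrow> real^'n \<Rightarrow> real" where
  "stage_cost Q R x u r = (1/2) * ((x - r) \<bullet> (Q *v (x - r)) + u \<bullet> (R *v u))"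

text \<open>Reference-dependent Q-function with horizon K.
  qfun A B Q R \<gamma> r k K d x u  is  ^K Q_\<kappa>(x,u) with \<kappa> = K - d (d = steps to go).
  The term  ^K Q_{\<kappa>+1} evaluated at its minimizer u^*  is the minimum value,
  written as an infimum over the next control.\<close>
fun qfun :: "real^'n^'n \<Rightarrow> real^'m^'n \<Rightarrow> real^'n^'n \<Rightarrow> real^'m^'m \<Rightarrow> real \<Rightarrow>
    (nat \<Rightarrow> real^'n) \<Rightarrow> nat \<Rightarrow> nat \<Rightarrow> nat \<Rightarrow> real^'n \<Rightarrow> real^'m \<Rightarrow> real" where
  "qfun A B Q R \<gamma> r k K 0 x u = stage_cost Q R x u (r (k + K))"
| "qfun A B Q R \<gamma> r k K (Suc d) x u =
     stage_cost Q R x u (r (k + (K - Suc d)))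
     + \<gamma> * (INF v. qfun A B Q R \<gamma> r k K d (A *v x + B *v u) v)"

text \<open>State trajectory from x_k under controls u (absolute time index):
  traj ... j = x_{k+j}.\<close>
fun traj :: "real^'n^'n \<Rightarrow> real^'m^'n \<Rightarrow> nat \<Rightarrow> real^'n \<Rightarrow> (nat \<Rightarrow> real^'m) \<Rightarrow> nat \<Rightarrow> real^'n" where
  "traj A B k x0 u 0 = x0"
| "traj A B k x0 u (Suc j) = A *v traj A B k x0 u j + B *v u (k + j)"

definition Jcost :: "real^'n^'n \<Rightarrow> real^'m^'n \<Rightarrow> real^'n^'n \<Rightarrow> real^'m^'m \<Rightarrow> real \<Rightarrow>
    (nat \<Rightarrow> real^'n) \<Rightarrow> nat \<Rightarrow> real^'n \<Rightarrow> (nat \<Rightarrow> real^'m) \<Rightarrow> ennreal" where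
  "Jcost A B Q R \<gamma> r k x0 u =
     (\<Sum>j. ennreal (\<gamma> ^ j * stage_cost Q R (traj A B k x0 u j) (u (k + j)) (r (k + j))))"

text \<open>Block quadratic form  z^T H z  with z = [x; u; r_0; ...; r_N] (rho j = r_j).\<close>
definition block_qf ::
  "real^'n^'n \<Rightarrow> real^'m^'n \<Rightarrow> (nat \<Rightarrow> real^'n^'n) \<Rightarrow>
   real^'n^'m \<Rightarrow> real^'m^'m \<Rightarrow> (nat \<Rightarrow> real^'n^'m) \<Rightarrow>
   (nat \<Rightarrow> real^'n^'n) \<Rightarrow> (nat \<Rightarrow> real^'m^'n) \<Rightarrow> (nat \<Rightarrow> nat \<Rightarrow> real^'n^'n) \<Rightarrow>
   nat \<Rightarrow> real^'n \<Rightarrow> real^'m \<Rightarrow> (nat \<Rightarrow> real^'n) \<Rightarrow> real" where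
  "block_qf hxx hxu hxr hux huu hur hrx hru hrr N x u \<rho> =
     x \<bullet> (hxx *v x) + x \<bullet> (hxu *v u) + (\<Sum>j\<le>N. x \<bullet> (hxr j *v \<rho> j))
   + u \<bullet> (hux *v x) + u \<bullet> (huu *v u) + (\<Sum>j\<le>N. u \<bullet> (hur j *v \<rho> j))
   + (\<Sum>i\<le>N. \<rho> i \<bullet> (hrx i *v x)) + (\<Sum>i\<le>N. \<rho> i \<bullet> (hru i *v u))
   + (\<Sum>i\<le>N. \<Sum>j\<le>N. \<rho> i \<bullet> (hrr i j *v \<rho> j))"

end

theory Submission
  imports Defs
begin

(* The finite-horizon Q-functions are nonnegative, convex and nondecreasing in the horizon, and
   coercive in the control because R is positive definite. Their limit W therefore satisfies a
   Bellman inequality  c(x,u,r_0) + gamma W(Ax+Bu, v) <= W(x,u)  for some v: nested nonempty compact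
   sublevel sets let the minimisation over v commute with the limit. Following such controls gives,
   for every u, a control sequence starting with u whose cost J is at most W(x,u), while every
   sequence starting with u costs at least each finite-horizon Q-function, hence at least W(x,u).
   So the optimal first control is the minimiser of the quadratic W(x_k, .), which is unique since
   h_uu dominates R; and h_ur_0 = 0 because r_k only shifts the first stage cost by an amount
   independent of u. *)

lemma le_convex_comb_INF:
  fixes f g :: "'a \<Rightarrow> real"
  assumes "bdd_below (range f)" "bdd_below (range g)" "0 \<le> t" "t \<le> 1"
    and "\<And>a b. P \<le> t * f a + (1 - t) * g b"
  shows "P \<le> t * (INF a. f a) + (1 - t) * (INF b. g b)"
proof (rule field_le_epsilon)
  fix e :: real
  assume "0 < e"
  then obtain a b where a: "f a < (INF a. f a) + e" and b: "g b < (INF b. g b) + e"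
    using cINF_less_iff[OF UNIV_not_empty assms(1)] cINF_less_iff[OF UNIV_not_empty assms(2)]
    by (metis less_add_same_cancel1)
  have "P \<le> t * f a + (1 - t) * g b"
    by (rule assms(5))
  also have "\<dots> \<le> t * ((INF a. f a) + e) + (1 - t) * ((INF b. g b) + e)"
    using a b assms(3,4) by (intro add_mono mult_left_mono) auto
  finally show "P \<le> t * (INF a. f a) + (1 - t) * (INF b. g b) + e"
    by (simp add: algebra_simps)
qed

lemma quadratic_form_convex:
  fixes M :: "real^'k^'k"
  assumes "\<And>z. 0 \<le> z \<bullet> (M *v z)" and "0 \<le> t" "t \<le> 1"
  shows "(t *\<^sub>R a + (1 - t) *\<^sub>R b) \<bullet> (M *v (t *\<^sub>R a + (1 - t) *\<^sub>R b))
     \<le> t * (a \<bullet> (M *v a)) + (1 - t) * (b \<bullet> (M *v b))"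
proof -
  have "t * (a \<bullet> (M *v a)) + (1 - t) * (b \<bullet> (M *v b))
     - (t *\<^sub>R a + (1 - t) *\<^sub>R b) \<bullet> (M *v (t *\<^sub>R a + (1 - t) *\<^sub>R b))
     = t * (1 - t) * ((a - b) \<bullet> (M *v (a - b)))"
    by (simp add: algebra_simps inner_add_left inner_add_right inner_diff_left inner_diff_right)
  moreover have "0 \<le> t * (1 - t) * ((a - b) \<bullet> (M *v (a - b)))"
    using assms by simp
  ultimately show ?thesis
    by linarith
qed

lemma inner_transpose_matrix: "a \<bullet> (transpose M *v b) = b \<bullet> (M *v (a::real^'k))"
  by (metis transpose_matrix_vector dot_lmul_matrix inner_commute)

lemma pos_def_coercive:
  fixes M :: "real^'k^'k"
  assumes "\<And>z. z \<noteq> 0 \<Longrightarrow> 0 < z \<bullet> (M *v z)"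
  shows "\<exists>c>0. \<forall>v. c * (norm v)\<^sup>2 \<le> v \<bullet> (M *v v)"
proof -
  have cont: "continuous_on (sphere 0 1) (\<lambda>v::real^'k. v \<bullet> (M *v v))"
    by (intro continuous_intros linear_continuous_on matrix_vector_mul_bounded_linear)
  obtain v\<^sub>0 where v\<^sub>0: "v\<^sub>0 \<in> sphere 0 1" "\<And>v. v \<in> sphere 0 1 \<Longrightarrow> v\<^sub>0 \<bullet> (M *v v\<^sub>0) \<le> v \<bullet> (M *v v)"
    using continuous_attains_inf[OF compact_sphere _ cont] by auto
  have "v\<^sub>0 \<bullet> (M *v v\<^sub>0) * (norm v)\<^sup>2 \<le> v \<bullet> (M *v v)" for v
  proof (cases "v = 0")
    case False
    then have "v\<^sub>0 \<bullet> (M *v v\<^sub>0) \<le> (v /\<^sub>R norm v) \<bullet> (M *v (v /\<^sub>R norm v))"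
      by (intro v\<^sub>0(2)) simp
    also have "\<dots> = v \<bullet> (M *v v) / (norm v)\<^sup>2"
      by (simp add: matrix_vector_mult_scaleR power2_eq_square divide_inverse)
    finally show ?thesis
      using False by (simp add: field_simps)
  qed simp
  moreover have "0 < v\<^sub>0 \<bullet> (M *v v\<^sub>0)"
    using v\<^sub>0(1) by (intro assms) auto
  ultimately show ?thesis
    by blast
qed

lemma continuous_attains_global_inf:
  fixes f :: "'a::heine_borel \<Rightarrow> real"
  assumes cont: "continuous_on UNIV f" and bdd: "bounded {x. f x \<le> f a}"
  shows "\<exists>x. \<forall>y. f x \<le> f y"
proof -
  have "compact {x. f x \<le> f a}"
    using bdd closed_Collect_le[OF cont continuous_on_const] by (simp add: compact_eq_bounded_closed)
  moreover have "{x. f x \<le> f a} \<noteq> {}"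
    by blast
  ultimately have "\<exists>x\<in>{x. f x \<le> f a}. \<forall>y\<in>{x. f x \<le> f a}. f x \<le> f y"
    by (intro continuous_attains_inf continuous_on_subset[OF cont subset_UNIV])
  then obtain x where x: "f x \<le> f a" "\<forall>y\<in>{x. f x \<le> f a}. f x \<le> f y"
    by blast
  have "f x \<le> f y" for y
    using x by (cases "f y \<le> f a") auto
  then show ?thesis
    by blast
qed

lemma matrix_inv_right:
  fixes M :: "'a::field^'n^'n"
  assumes "invertible M"
  shows "M ** matrix_inv M = mat 1"
  using assms unfolding invertible_def matrix_inv_def by (rule someI_ex[THEN conjunct1])

lemma pos_def_invertible:
  fixes M :: "real^'n^'n"
  assumes "\<And>z. z \<noteq> 0 \<Longrightarrow> 0 < z \<bullet> (M *v z)"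
  shows "invertible M"
  unfolding invertible_left_inverse matrix_left_invertible_ker
  using assms by (metis inner_zero_right less_irrefl)

lemma quadratic_complete_square:
  fixes M :: "real^'n^'n"
  assumes "transpose M = M" and "M *v v = - g"
  shows "u \<bullet> (M *v u) + 2 * (u \<bullet> g) = v \<bullet> (M *v v) + 2 * (v \<bullet> g) + (u - v) \<bullet> (M *v (u - v))"
proof -
  have "v \<bullet> (M *v u) = u \<bullet> (M *v v)"
    by (metis assms(1) inner_transpose_matrix)
  moreover have "g = - (M *v v)"
    using assms(2) by simp
  ultimately show ?thesis
    by (simp add: matrix_vector_mult_diff_distrib inner_diff_left inner_diff_right)
qed

lemma optimal_first_control:
  fixes J :: "(nat \<Rightarrow> 'a) \<Rightarrow> ennreal" and V :: "'a \<Rightarrow> real"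
  assumes lower: "\<And>u. ennreal (V (u k)) \<le> J u"
    and attained: "\<And>a. \<exists>u. J u \<le> ennreal (V a)"
    and unique_min: "\<And>a. a \<noteq> a\<^sub>0 \<Longrightarrow> V a\<^sub>0 < V a" and "0 \<le> V a\<^sub>0"
  shows "(\<exists>u. \<forall>v. J u \<le> J v) \<and> (\<forall>u. (\<forall>v. J u \<le> J v) \<longrightarrow> u k = a\<^sub>0)"
proof (intro conjI allI impI)
  obtain u\<^sub>0 where u\<^sub>0: "J u\<^sub>0 \<le> ennreal (V a\<^sub>0)"
    using attained by blast
  have "V a\<^sub>0 \<le> V a" for a
    using unique_min by (cases "a = a\<^sub>0") (auto intro: less_imp_le)
  then have "J u\<^sub>0 \<le> J v" for v
    using u\<^sub>0 lower[of v] by (meson ennreal_leI order_trans)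
  then show "\<exists>u. \<forall>v. J u \<le> J v"
    by blast
  fix u
  assume "\<forall>v. J u \<le> J v"
  then have "ennreal (V (u k)) \<le> ennreal (V a\<^sub>0)"
    using lower[of u] u\<^sub>0 by (meson order_trans)
  then have "V (u k) \<le> V a\<^sub>0"
    using \<open>0 \<le> V a\<^sub>0\<close> by simp
  then show "u k = a\<^sub>0"
    using unique_min by force
qed

lemma ennreal_suminf_le_telescoping:
  fixes c V :: "nat \<Rightarrow> real"
  assumes step: "\<And>j. c j + V (Suc j) \<le> V j" and "\<And>j. 0 \<le> c j" and "\<And>j. 0 \<le> V j"
  shows "(\<Sum>j. ennreal (c j)) \<le> ennreal (V 0)"
proof (rule suminf_le_const)
  fix K
  have "(\<Sum>j<K. c j) + V K \<le> V 0"
  proof (induction K)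
    case (Suc K)
    then show ?case
      using step[of K] by simp
  qed simp
  then have "(\<Sum>j<K. c j) \<le> V 0"
    using assms(3)[of K] by linarith
  then show "(\<Sum>j<K. ennreal (c j)) \<le> ennreal (V 0)"
    using assms(2) by (simp add: ennreal_leI)
qed simp

lemma traj_shift_start: "traj A B k x u j = traj A B 0 x (\<lambda>i. u (k + i)) j"
  by (induction j) auto

lemma traj_Suc_shift:
  "traj A B 0 x w (Suc j) = traj A B 0 (A *v x + B *v w 0) (\<lambda>i. w (Suc i)) j"
  by (induction j) auto

locale lq_cost =
  fixes A :: "real^'n^'n" and B :: "real^'m^'n" and Q :: "real^'n^'n" and R :: "real^'m^'m"
    and \<gamma> :: real
  assumes Q_nonneg: "0 \<le> z \<bullet> (Q *v z)"
    and R_pos_def: "v \<noteq> 0 \<Longrightarrow> 0 < v \<bullet> (R *v v)"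
    and gamma_nonneg: "0 \<le> \<gamma>"
begin

(* The paper's Q-function with d steps to go, the references re-indexed so that the current one
   is sigma 0. *)
fun Q_to_go :: "(nat \<Rightarrow> real^'n) \<Rightarrow> nat \<Rightarrow> real^'n \<Rightarrow> real^'m \<Rightarrow> real" where
  "Q_to_go \<sigma> 0 x u = stage_cost Q R x u (\<sigma> 0)"
| "Q_to_go \<sigma> (Suc d) x u =
     stage_cost Q R x u (\<sigma> 0) + \<gamma> * (INF v. Q_to_go (\<lambda>j. \<sigma> (Suc j)) d (A *v x + B *v u) v)"

definition discounted_cost :: "(nat \<Rightarrow> real^'n) \<Rightarrow> real^'n \<Rightarrow> (nat \<Rightarrow> real^'m) \<Rightarrow> ennreal" where
  "discounted_cost \<sigma> x w = (\<Sum>j. ennreal (\<gamma> ^ j * stage_cost Q R (traj A B 0 x w j) (w j) (\<sigma> j)))"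

lemma qfun_eq_Q_to_go:
  "d \<le> K \<Longrightarrow> qfun A B Q R \<gamma> r k K d x u = Q_to_go (\<lambda>j. r (k + (K - d) + j)) d x u"
proof (induction d arbitrary: x u)
  case (Suc d)
  have "(\<lambda>j. r (k + (K - Suc d) + Suc j)) = (\<lambda>j. r (k + (K - d) + j))"
    using Suc.prems by (auto simp: Suc_diff_Suc)
  then show ?case
    using Suc by simp
qed simp

lemma Jcost_eq_discounted_cost:
  "Jcost A B Q R \<gamma> r k x u = discounted_cost (\<lambda>j. r (k + j)) x (\<lambda>i. u (k + i))"
  by (simp add: Jcost_def discounted_cost_def traj_shift_start[of A B k])

lemma Q_to_go_fun_upd_0:
  "Q_to_go (\<sigma>(0 := s)) d x u = Q_to_go \<sigma> d x u + stage_cost Q R x u s - stage_cost Q R x u (\<sigma> 0)"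
  by (cases d) simp_all

lemma R_nonneg: "0 \<le> v \<bullet> (R *v v)"
  using R_pos_def[of v] by (cases "v = 0") auto

lemma stage_cost_nonneg: "0 \<le> stage_cost Q R x u r"
  using Q_nonneg R_nonneg by (simp add: stage_cost_def)

lemma stage_cost_convex:
  assumes "0 \<le> t" "t \<le> 1"
  shows "stage_cost Q R (t *\<^sub>R x\<^sub>1 + (1 - t) *\<^sub>R x\<^sub>2) (t *\<^sub>R u\<^sub>1 + (1 - t) *\<^sub>R u\<^sub>2) r
    \<le> t * stage_cost Q R x\<^sub>1 u\<^sub>1 r + (1 - t) * stage_cost Q R x\<^sub>2 u\<^sub>2 r"
proof -
  have shift: "t *\<^sub>R x\<^sub>1 + (1 - t) *\<^sub>R x\<^sub>2 - r = t *\<^sub>R (x\<^sub>1 - r) + (1 - t) *\<^sub>R (x\<^sub>2 - r)"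
    by (simp add: algebra_simps)
  have mix: "t * (1/2 * (a + b)) + (1 - t) * (1/2 * (c + d))
      = 1/2 * ((t * a + (1 - t) * c) + (t * b + (1 - t) * d))" for a b c d :: real
    by algebra
  show ?thesis
    using quadratic_form_convex[OF Q_nonneg assms, of "x\<^sub>1 - r" "x\<^sub>2 - r"]
      quadratic_form_convex[OF R_nonneg assms, of u\<^sub>1 u\<^sub>2]
    unfolding stage_cost_def mix shift by (intro mult_left_mono add_mono) auto
qed

lemma Q_to_go_nonneg: "0 \<le> Q_to_go \<sigma> d x u"
proof (induction d arbitrary: \<sigma> x u)
  case (Suc d)
  then have "0 \<le> (INF v. Q_to_go (\<lambda>j. \<sigma> (Suc j)) d (A *v x + B *v u) v)"
    by (intro cINF_greatest) auto
  then show ?case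
    using gamma_nonneg stage_cost_nonneg by simp
qed (simp add: stage_cost_nonneg)

lemma bdd_below_Q_to_go: "bdd_below (range (Q_to_go \<sigma> d x))"
  using Q_to_go_nonneg by (intro bdd_belowI) blast

lemma Q_to_go_le_Suc: "Q_to_go \<sigma> d x u \<le> Q_to_go \<sigma> (Suc d) x u"
proof (induction d arbitrary: \<sigma> x u)
  case 0
  have "0 \<le> (INF v. Q_to_go (\<lambda>j. \<sigma> (Suc j)) 0 (A *v x + B *v u) v)"
    by (intro cINF_greatest Q_to_go_nonneg) simp
  then show ?case
    using gamma_nonneg by simp
next
  case (Suc d)
  have "(INF v. Q_to_go (\<lambda>j. \<sigma> (Suc j)) d (A *v x + B *v u) v)
      \<le> (INF v. Q_to_go (\<lambda>j. \<sigma> (Suc j)) (Suc d) (A *v x + B *v u) v)"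
    using Suc.IH by (intro cINF_mono bdd_below_Q_to_go) auto
  then show ?case
    using gamma_nonneg by (simp add: mult_left_mono)
qed

lemma incseq_Q_to_go: "incseq (\<lambda>d. Q_to_go \<sigma> d x u)"
  by (rule incseq_SucI) (rule Q_to_go_le_Suc)

lemma Q_to_go_le_partial_cost:
  "Q_to_go \<sigma> d x (w 0) \<le> (\<Sum>j\<le>d. \<gamma> ^ j * stage_cost Q R (traj A B 0 x w j) (w j) (\<sigma> j))"
proof (induction d arbitrary: \<sigma> x w)
  case (Suc d)
  let ?y = "A *v x + B *v w 0" and ?w = "\<lambda>i. w (Suc i)" and ?\<sigma> = "\<lambda>j. \<sigma> (Suc j)"
  have "(INF v. Q_to_go ?\<sigma> d ?y v) \<le> Q_to_go ?\<sigma> d ?y (?w 0)"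
    by (rule cINF_lower) (auto simp: bdd_below_Q_to_go)
  also have "\<dots> \<le> (\<Sum>j\<le>d. \<gamma> ^ j * stage_cost Q R (traj A B 0 ?y ?w j) (?w j) (?\<sigma> j))"
    by (rule Suc.IH)
  finally have "\<gamma> * (INF v. Q_to_go ?\<sigma> d ?y v)
      \<le> \<gamma> * (\<Sum>j\<le>d. \<gamma> ^ j * stage_cost Q R (traj A B 0 ?y ?w j) (?w j) (?\<sigma> j))"
    using gamma_nonneg by (rule mult_left_mono)
  then show ?case
    unfolding sum.atMost_Suc_shift
    by (simp add: sum_distrib_left traj_Suc_shift mult.assoc del: traj.simps(2))
qed simp

lemma Q_to_go_convex:
  assumes t: "0 \<le> t" "t \<le> 1"
  shows "Q_to_go \<sigma> d (t *\<^sub>R x\<^sub>1 + (1 - t) *\<^sub>R x\<^sub>2) (t *\<^sub>R u\<^sub>1 + (1 - t) *\<^sub>R u\<^sub>2)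
    \<le> t * Q_to_go \<sigma> d x\<^sub>1 u\<^sub>1 + (1 - t) * Q_to_go \<sigma> d x\<^sub>2 u\<^sub>2"
proof (induction d arbitrary: \<sigma> x\<^sub>1 x\<^sub>2 u\<^sub>1 u\<^sub>2)
  case 0
  then show ?case
    using stage_cost_convex[OF t] by simp
next
  case (Suc d)
  let ?\<sigma> = "\<lambda>j. \<sigma> (Suc j)" and ?y\<^sub>1 = "A *v x\<^sub>1 + B *v u\<^sub>1" and ?y\<^sub>2 = "A *v x\<^sub>2 + B *v u\<^sub>2"
  have y: "A *v (t *\<^sub>R x\<^sub>1 + (1 - t) *\<^sub>R x\<^sub>2) + B *v (t *\<^sub>R u\<^sub>1 + (1 - t) *\<^sub>R u\<^sub>2)
      = t *\<^sub>R ?y\<^sub>1 + (1 - t) *\<^sub>R ?y\<^sub>2"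
    by (simp add: algebra_simps)
  have "(INF v. Q_to_go ?\<sigma> d (t *\<^sub>R ?y\<^sub>1 + (1 - t) *\<^sub>R ?y\<^sub>2) v)
      \<le> t * (INF v. Q_to_go ?\<sigma> d ?y\<^sub>1 v) + (1 - t) * (INF v. Q_to_go ?\<sigma> d ?y\<^sub>2 v)"
  proof (rule le_convex_comb_INF[OF bdd_below_Q_to_go bdd_below_Q_to_go t])
    fix v\<^sub>1 v\<^sub>2
    have "(INF v. Q_to_go ?\<sigma> d (t *\<^sub>R ?y\<^sub>1 + (1 - t) *\<^sub>R ?y\<^sub>2) v)
        \<le> Q_to_go ?\<sigma> d (t *\<^sub>R ?y\<^sub>1 + (1 - t) *\<^sub>R ?y\<^sub>2) (t *\<^sub>R v\<^sub>1 + (1 - t) *\<^sub>R v\<^sub>2)"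
      by (rule cINF_lower[OF bdd_below_Q_to_go]) simp
    also have "\<dots> \<le> t * Q_to_go ?\<sigma> d ?y\<^sub>1 v\<^sub>1 + (1 - t) * Q_to_go ?\<sigma> d ?y\<^sub>2 v\<^sub>2"
      by (rule Suc.IH)
    finally show "(INF v. Q_to_go ?\<sigma> d (t *\<^sub>R ?y\<^sub>1 + (1 - t) *\<^sub>R ?y\<^sub>2) v)
        \<le> t * Q_to_go ?\<sigma> d ?y\<^sub>1 v\<^sub>1 + (1 - t) * Q_to_go ?\<sigma> d ?y\<^sub>2 v\<^sub>2" .
  qed
  then have "\<gamma> * (INF v. Q_to_go ?\<sigma> d (t *\<^sub>R ?y\<^sub>1 + (1 - t) *\<^sub>R ?y\<^sub>2) v)
      \<le> \<gamma> * (t * (INF v. Q_to_go ?\<sigma> d ?y\<^sub>1 v) + (1 - t) * (INF v. Q_to_go ?\<sigma> d ?y\<^sub>2 v))"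
    using gamma_nonneg by (rule mult_left_mono)
  then show ?case
    using stage_cost_convex[OF t, of x\<^sub>1 x\<^sub>2 u\<^sub>1 u\<^sub>2 "\<sigma> 0"]
    unfolding Q_to_go.simps(2) y by (simp add: algebra_simps)
qed

lemma continuous_on_Q_to_go: "continuous_on UNIV (Q_to_go \<sigma> d x)"
proof (rule convex_on_continuous)
  show "convex_on UNIV (Q_to_go \<sigma> d x)"
  proof (rule convex_onI)
    fix t :: real and u v
    assume "0 < t" "t < 1"
    then show "Q_to_go \<sigma> d x ((1 - t) *\<^sub>R u + t *\<^sub>R v) \<le> (1 - t) * Q_to_go \<sigma> d x u + t * Q_to_go \<sigma> d x v"
      using Q_to_go_convex[of "1 - t" \<sigma> d x x u v] by (simp add: algebra_simps scaleR_diff_left[symmetric])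
  qed auto
qed simp

lemma Q_to_go_sublevel_bounded: "bounded {v. Q_to_go \<sigma> d x v \<le> b}"
proof -
  obtain c where c: "0 < c" "\<And>v. c * (norm v)\<^sup>2 \<le> v \<bullet> (R *v v)"
    using pos_def_coercive[OF R_pos_def] by blast
  have "norm v \<le> sqrt (2 * b / c)" if "Q_to_go \<sigma> d x v \<le> b" for v
  proof (rule real_le_rsqrt)
    have "c * (norm v)\<^sup>2 \<le> 2 * stage_cost Q R x v (\<sigma> 0)"
      using c(2)[of v] Q_nonneg[of "x - \<sigma> 0"] by (simp add: stage_cost_def)
    also have "\<dots> = 2 * Q_to_go \<sigma> 0 x v"
      by simp
    also have "\<dots> \<le> 2 * Q_to_go \<sigma> d x v"
      using incseqD[OF incseq_Q_to_go, of 0 d] by simp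
    also have "\<dots> \<le> 2 * b"
      using that by simp
    finally show "(norm v)\<^sup>2 \<le> 2 * b / c"
      using c(1) by (simp add: field_simps)
  qed
  then show ?thesis
    unfolding bounded_iff by blast
qed

lemma Q_to_go_attains_INF: "\<exists>v. Q_to_go \<sigma> d x v = (INF v. Q_to_go \<sigma> d x v)"
proof -
  obtain v where "\<And>w. Q_to_go \<sigma> d x v \<le> Q_to_go \<sigma> d x w"
    using continuous_attains_global_inf[OF continuous_on_Q_to_go Q_to_go_sublevel_bounded] by blast
  then have "Q_to_go \<sigma> d x v = (INF v. Q_to_go \<sigma> d x v)"
    by (intro antisym cINF_greatest cINF_lower bdd_below_Q_to_go) auto
  then show ?thesis ..
qed

end

locale lq_cost_limit = lq_cost A B Q R \<gamma>
  for A :: "real^'n^'n" and B :: "real^'m^'n" and Q R \<gamma> +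
  fixes W :: "(nat \<Rightarrow> real^'n) \<Rightarrow> real^'n \<Rightarrow> real^'m \<Rightarrow> real" and N :: nat
  assumes Q_to_go_tendsto: "\<forall>j>N. \<sigma> j = 0 \<Longrightarrow> (\<lambda>K. Q_to_go \<sigma> K x u) \<longlonglongrightarrow> W \<sigma> x u"
begin

lemma Q_to_go_le_W: "\<forall>j>N. \<sigma> j = 0 \<Longrightarrow> Q_to_go \<sigma> d x u \<le> W \<sigma> x u"
  by (rule incseq_le[OF incseq_Q_to_go Q_to_go_tendsto])

lemma W_nonneg:
  assumes "\<forall>j>N. \<sigma> j = 0"
  shows "0 \<le> W \<sigma> x u"
  using Q_to_go_nonneg[of \<sigma> 0 x u] Q_to_go_le_W[OF assms, of 0 x u] by linarith

lemma W_fun_upd_0: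
  assumes "\<forall>j>N. \<sigma> j = 0"
  shows "W (\<sigma>(0 := s)) x u = W \<sigma> x u + stage_cost Q R x u s - stage_cost Q R x u (\<sigma> 0)"
proof -
  have "(\<lambda>K. Q_to_go (\<sigma>(0 := s)) K x u) \<longlonglongrightarrow> W \<sigma> x u + stage_cost Q R x u s - stage_cost Q R x u (\<sigma> 0)"
    unfolding Q_to_go_fun_upd_0 by (intro tendsto_intros Q_to_go_tendsto assms)
  moreover have "(\<lambda>K. Q_to_go (\<sigma>(0 := s)) K x u) \<longlonglongrightarrow> W (\<sigma>(0 := s)) x u"
    using assms by (intro Q_to_go_tendsto) simp
  ultimately show ?thesis
    using LIMSEQ_unique by blast
qed

lemma W_le_discounted_cost:
  assumes "\<forall>j>N. \<sigma> j = 0"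
  shows "ennreal (W \<sigma> x (w 0)) \<le> discounted_cost \<sigma> x w"
proof (rule LIMSEQ_le_const2)
  show "(\<lambda>K. ennreal (Q_to_go \<sigma> K x (w 0))) \<longlonglongrightarrow> ennreal (W \<sigma> x (w 0))"
    using Q_to_go_tendsto[OF assms] by (rule tendsto_ennrealI)
  let ?c = "\<lambda>j. \<gamma> ^ j * stage_cost Q R (traj A B 0 x w j) (w j) (\<sigma> j)"
  have "ennreal (Q_to_go \<sigma> K x (w 0)) \<le> discounted_cost \<sigma> x w" for K
  proof -
    have "ennreal (Q_to_go \<sigma> K x (w 0)) \<le> ennreal (\<Sum>j\<le>K. ?c j)"
      using Q_to_go_le_partial_cost by (rule ennreal_leI)
    also have "\<dots> = (\<Sum>j\<le>K. ennreal (?c j))"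
      using gamma_nonneg stage_cost_nonneg by simp
    also have "\<dots> \<le> discounted_cost \<sigma> x w"
      unfolding discounted_cost_def by (rule sum_le_suminf) auto
    finally show ?thesis .
  qed
  then show "\<exists>K\<^sub>0. \<forall>K\<ge>K\<^sub>0. ennreal (Q_to_go \<sigma> K x (w 0)) \<le> discounted_cost \<sigma> x w"
    by blast
qed

lemma W_Bellman_inequality:
  assumes \<sigma>: "\<forall>j>N. \<sigma> j = 0"
  shows "\<exists>v. stage_cost Q R x u (\<sigma> 0) + \<gamma> * W (\<lambda>j. \<sigma> (Suc j)) (A *v x + B *v u) v \<le> W \<sigma> x u"
proof (cases "\<gamma> = 0")
  case True
  have "stage_cost Q R x u (\<sigma> 0) \<le> W \<sigma> x u"
    using Q_to_go_le_W[OF \<sigma>, of 0 x u] by simp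
  with True show ?thesis
    by simp
next
  case False
  with gamma_nonneg have "0 < \<gamma>"
    by simp
  define \<tau> where "\<tau> = (\<lambda>j. \<sigma> (Suc j))"
  define y where "y = A *v x + B *v u"
  define m where "m = (W \<sigma> x u - stage_cost Q R x u (\<sigma> 0)) / \<gamma>"
  define S where "S K = {v. Q_to_go \<tau> K y v \<le> m}" for K
  have \<tau>: "\<forall>j>N. \<tau> j = 0"
    using \<sigma> by (simp add: \<tau>_def)
  have "\<Inter>(range S) \<noteq> {}"
  proof (rule compact_nest)
    show "compact (S K)" for K
      unfolding S_def compact_eq_bounded_closed
      using Q_to_go_sublevel_bounded closed_Collect_le[OF continuous_on_Q_to_go continuous_on_const]
      by blast
  next
    fix K
    obtain v where v: "Q_to_go \<tau> K y v = (INF v. Q_to_go \<tau> K y v)"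
      using Q_to_go_attains_INF by blast
    have "stage_cost Q R x u (\<sigma> 0) + \<gamma> * Q_to_go \<tau> K y v = Q_to_go \<sigma> (Suc K) x u"
      using v by (simp add: \<tau>_def y_def)
    also have "\<dots> \<le> W \<sigma> x u"
      by (rule Q_to_go_le_W[OF \<sigma>])
    finally have "v \<in> S K"
      using \<open>0 < \<gamma>\<close> by (simp add: S_def m_def field_simps)
    then show "S K \<noteq> {}"
      by blast
  next
    show "S L \<subseteq> S K" if "K \<le> L" for K L
      unfolding S_def using incseqD[OF incseq_Q_to_go that] by (blast intro: order_trans)
  qed
  then obtain v where "\<And>K. Q_to_go \<tau> K y v \<le> m"
    unfolding S_def by blast
  then have "W \<tau> y v \<le> m"
    by (intro LIMSEQ_le_const2[OF Q_to_go_tendsto[OF \<tau>]]) auto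
  then have "stage_cost Q R x u (\<sigma> 0) + \<gamma> * W \<tau> y v \<le> W \<sigma> x u"
    using \<open>0 < \<gamma>\<close> by (simp add: m_def field_simps)
  then show ?thesis
    unfolding \<tau>_def y_def by blast
qed

lemma discounted_cost_le_W:
  assumes \<sigma>: "\<forall>j>N. \<sigma> j = 0"
  shows "\<exists>w. w 0 = u\<^sub>0 \<and> discounted_cost \<sigma> x w \<le> ennreal (W \<sigma> x u\<^sub>0)"
proof -
  obtain greedy where greedy: "\<And>\<sigma> x u. \<forall>j>N. \<sigma> j = 0 \<Longrightarrow>
      stage_cost Q R x u (\<sigma> 0) + \<gamma> * W (\<lambda>j. \<sigma> (Suc j)) (A *v x + B *v u) (greedy \<sigma> x u) \<le> W \<sigma> x u"
    using W_Bellman_inequality by metis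
  define p where "p = rec_nat (x, u\<^sub>0)
    (\<lambda>j p\<^sub>j. (A *v fst p\<^sub>j + B *v snd p\<^sub>j, greedy (\<lambda>i. \<sigma> (j + i)) (fst p\<^sub>j) (snd p\<^sub>j)))"
  define w where "w j = snd (p j)" for j
  have traj: "traj A B 0 x w j = fst (p j)" for j
    by (induction j) (simp_all add: p_def w_def)
  let ?c = "\<lambda>j. \<gamma> ^ j * stage_cost Q R (fst (p j)) (snd (p j)) (\<sigma> j)"
  let ?V = "\<lambda>j. \<gamma> ^ j * W (\<lambda>i. \<sigma> (j + i)) (fst (p j)) (snd (p j))"
  have "?c j + ?V (Suc j) \<le> ?V j" for j
  proof -
    have "stage_cost Q R (fst (p j)) (snd (p j)) (\<sigma> j)
        + \<gamma> * W (\<lambda>i. \<sigma> (Suc j + i)) (fst (p (Suc j))) (snd (p (Suc j)))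
        \<le> W (\<lambda>i. \<sigma> (j + i)) (fst (p j)) (snd (p j))"
      using greedy[of "\<lambda>i. \<sigma> (j + i)" "fst (p j)" "snd (p j)"] \<sigma> by (simp add: p_def)
    then have "\<gamma> ^ j * (stage_cost Q R (fst (p j)) (snd (p j)) (\<sigma> j)
        + \<gamma> * W (\<lambda>i. \<sigma> (Suc j + i)) (fst (p (Suc j))) (snd (p (Suc j))))
        \<le> \<gamma> ^ j * W (\<lambda>i. \<sigma> (j + i)) (fst (p j)) (snd (p j))"
      using gamma_nonneg by (intro mult_left_mono) auto
    then show ?thesis
      by (simp add: algebra_simps)
  qed
  then have "(\<Sum>j. ennreal (?c j)) \<le> ennreal (?V 0)"
    by (rule ennreal_suminf_le_telescoping) (use gamma_nonneg stage_cost_nonneg W_nonneg \<sigma> in auto)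
  moreover have "discounted_cost \<sigma> x w = (\<Sum>j. ennreal (?c j))"
    by (simp add: discounted_cost_def traj w_def)
  moreover have "w 0 = u\<^sub>0" "?V 0 = W \<sigma> x u\<^sub>0"
    by (simp_all add: w_def p_def)
  ultimately show ?thesis
    by metis
qed

end

locale lq_block_limit = lq_cost_limit A B Q R \<gamma> W N
  for A :: "real^'n^'n" and B :: "real^'m^'n" and Q R \<gamma> W and N :: nat +
  fixes hxx :: "real^'n^'n" and hxu :: "real^'m^'n" and hxr :: "nat \<Rightarrow> real^'n^'n"
    and hux :: "real^'n^'m" and huu :: "real^'m^'m" and hur :: "nat \<Rightarrow> real^'n^'m"
    and hrx :: "nat \<Rightarrow> real^'n^'n" and hru :: "nat \<Rightarrow> real^'m^'n"
    and hrr :: "nat \<Rightarrow> nat \<Rightarrow> real^'n^'n"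
  assumes W_eq: "W \<sigma> x u = 1/2 * block_qf hxx hxu hxr hux huu hur hrx hru hrr N x u \<sigma>"
    and hux_eq: "hux = transpose hxu"
    and hru_eq: "hru j = transpose (hur j)"
    and huu_sym: "transpose huu = huu"
begin

lemma W_quadratic_in_control:
  "W \<sigma> x u = W \<sigma> x 0 + 1/2 * (u \<bullet> (huu *v u)) + u \<bullet> (hux *v x + (\<Sum>j\<le>N. hur j *v \<sigma> j))"
proof -
  have "x \<bullet> (hxu *v u) = u \<bullet> (hux *v x)"
    unfolding hux_eq by (rule inner_transpose_matrix[symmetric])
  moreover have "\<sigma> j \<bullet> (hru j *v u) = u \<bullet> (hur j *v \<sigma> j)" for j
    unfolding hru_eq by (rule inner_transpose_matrix)
  ultimately show ?thesis
    unfolding W_eq block_qf_def by (simp add: inner_sum_right inner_add_right algebra_simps)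
qed

lemma huu_pos_def:
  assumes "u \<noteq> 0"
  shows "0 < u \<bullet> (huu *v u)"
proof -
  have "1/2 * (u \<bullet> (R *v u)) = stage_cost Q R 0 u 0"
    by (simp add: stage_cost_def)
  also have "\<dots> \<le> W (\<lambda>_. 0) 0 u"
    using Q_to_go_le_W[of "\<lambda>_. 0" 0 0 u] by simp
  also have "\<dots> = 1/2 * (u \<bullet> (huu *v u))"
    using W_quadratic_in_control[of "\<lambda>_. 0" 0 u] by (simp add: W_eq block_qf_def)
  finally show ?thesis
    using R_pos_def[OF assms] by linarith
qed

(* Changing the current reference shifts W at x = 0 by a constant independent of u
   (only the first stage cost sees it), so it cannot enter the term linear in u. *)
lemma hur_0_eq_0: "hur 0 = 0"
proof -
  have "u \<bullet> (hur 0 *v s) = 0" for u s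
  proof -
    define \<rho> :: "nat \<Rightarrow> real^'n" where "\<rho> = (\<lambda>_. 0)(0 := s)"
    have "stage_cost Q R 0 v s - stage_cost Q R 0 v 0 = 1/2 * (s \<bullet> (Q *v s))" for v
      by (simp add: stage_cost_def add_divide_distrib linear_neg[OF matrix_vector_mul_linear])
    then have upd: "W \<rho> 0 v = W (\<lambda>_. 0) 0 v + 1/2 * (s \<bullet> (Q *v s))" for v
      using W_fun_upd_0[of "\<lambda>_. 0" s 0 v] unfolding \<rho>_def by simp
    have "(\<Sum>j\<le>N. hur j *v \<rho> j) = hur 0 *v s"
      by (simp add: \<rho>_def if_distrib[of "\<lambda>v. _ *v v"] sum.delta cong: if_cong)
    then show "u \<bullet> (hur 0 *v s) = 0"
      using W_quadratic_in_control[of \<rho> 0 u] W_quadratic_in_control[of "\<lambda>_. 0" 0 u] upd[of u] upd[of 0] by simp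
  qed
  then have "hur 0 *v s = 0 *v s" for s
    using inner_eq_zero_iff by (metis matrix_vector_mult_0)
  then show ?thesis
    by (simp add: matrix_eq)
qed

definition optimal_control :: "real^'n \<Rightarrow> (nat \<Rightarrow> real^'n) \<Rightarrow> real^'m" where
  "optimal_control x \<sigma> = - (matrix_inv huu *v (hux *v x + (\<Sum>j\<in>{1..N}. hur j *v \<sigma> j)))"

lemma W_optimal_control_less:
  assumes "u \<noteq> optimal_control x \<sigma>"
  shows "W \<sigma> x (optimal_control x \<sigma>) < W \<sigma> x u"
proof -
  define g where "g = hux *v x + (\<Sum>j\<in>{1..N}. hur j *v \<sigma> j)"
  define u\<^sub>o\<^sub>p\<^sub>t where "u\<^sub>o\<^sub>p\<^sub>t = optimal_control x \<sigma>"
  have "{..N} = insert 0 {1..N}"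
    by auto
  then have "(\<Sum>j\<le>N. hur j *v \<sigma> j) = (\<Sum>j\<in>{1..N}. hur j *v \<sigma> j)"
    by (simp add: hur_0_eq_0)
  then have W: "W \<sigma> x v = W \<sigma> x 0 + 1/2 * (v \<bullet> (huu *v v) + 2 * (v \<bullet> g))" for v
    using W_quadratic_in_control[of \<sigma> x v] by (simp add: g_def algebra_simps)
  have "huu *v u\<^sub>o\<^sub>p\<^sub>t = - ((huu ** matrix_inv huu) *v g)"
    by (simp add: u\<^sub>o\<^sub>p\<^sub>t_def optimal_control_def g_def linear_neg[OF matrix_vector_mul_linear]
        matrix_vector_mul_assoc[symmetric])
  then have "huu *v u\<^sub>o\<^sub>p\<^sub>t = - g"
    by (simp add: matrix_inv_right[OF pos_def_invertible[OF huu_pos_def]])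
  then have "W \<sigma> x u = W \<sigma> x u\<^sub>o\<^sub>p\<^sub>t + 1/2 * ((u - u\<^sub>o\<^sub>p\<^sub>t) \<bullet> (huu *v (u - u\<^sub>o\<^sub>p\<^sub>t)))"
    using W[of u] W[of u\<^sub>o\<^sub>p\<^sub>t] quadratic_complete_square[OF huu_sym, of u\<^sub>o\<^sub>p\<^sub>t g u] by simp
  moreover have "0 < (u - u\<^sub>o\<^sub>p\<^sub>t) \<bullet> (huu *v (u - u\<^sub>o\<^sub>p\<^sub>t))"
    using assms by (intro huu_pos_def) (simp add: u\<^sub>o\<^sub>p\<^sub>t_def)
  ultimately show ?thesis
    by (simp add: u\<^sub>o\<^sub>p\<^sub>t_def)
qed

lemma Jcost_optimal_first_control:
  assumes "\<forall>i>k + N. r i = 0"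
  shows "(\<exists>u. \<forall>v. Jcost A B Q R \<gamma> r k x u \<le> Jcost A B Q R \<gamma> r k x v)
    \<and> (\<forall>u. (\<forall>v. Jcost A B Q R \<gamma> r k x u \<le> Jcost A B Q R \<gamma> r k x v) \<longrightarrow>
          u k = optimal_control x (\<lambda>j. r (k + j)))"
proof (rule optimal_first_control)
  let ?\<sigma> = "\<lambda>j. r (k + j)"
  have \<sigma>: "\<forall>j>N. ?\<sigma> j = 0"
    using assms by simp
  show "ennreal (W ?\<sigma> x (u k)) \<le> Jcost A B Q R \<gamma> r k x u" for u
    using W_le_discounted_cost[OF \<sigma>, of x "\<lambda>i. u (k + i)"] by (simp add: Jcost_eq_discounted_cost)
  show "\<exists>u. Jcost A B Q R \<gamma> r k x u \<le> ennreal (W ?\<sigma> x a)" for a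
  proof -
    obtain w where "w 0 = a" "discounted_cost ?\<sigma> x w \<le> ennreal (W ?\<sigma> x a)"
      using discounted_cost_le_W[OF \<sigma>] by blast
    then have "Jcost A B Q R \<gamma> r k x (\<lambda>i. w (i - k)) \<le> ennreal (W ?\<sigma> x a)"
      by (simp add: Jcost_eq_discounted_cost)
    then show ?thesis
      by blast
  qed
  show "W ?\<sigma> x (optimal_control x ?\<sigma>) < W ?\<sigma> x a" if "a \<noteq> optimal_control x ?\<sigma>" for a
    using W_optimal_control_less[OF that] .
  show "0 \<le> W ?\<sigma> x (optimal_control x ?\<sigma>)"
    using W_nonneg[OF \<sigma>] .
qed

end

theorem corollary1:
  fixes A :: "real^'n^'n" and B :: "real^'m^'n"
    and Q :: "real^'n^'n" and R :: "real^'m^'m" and \<gamma> :: real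
    and k N :: nat and r :: "nat \<Rightarrow> real^'n" and xk :: "real^'n"
    and hxx :: "real^'n^'n" and hxu :: "real^'m^'n" and hxr :: "nat \<Rightarrow> real^'n^'n"
    and hux :: "real^'n^'m" and huu :: "real^'m^'m" and hur :: "nat \<Rightarrow> real^'n^'m"
    and hrx :: "nat \<Rightarrow> real^'n^'n" and hru :: "nat \<Rightarrow> real^'m^'n"
    and hrr :: "nat \<Rightarrow> nat \<Rightarrow> real^'n^'n"
  assumes ctrb: "controllable A B"
    and Qpsd: "psd Q" and Rpd: "pd R"
    and gam: "0 \<le> \<gamma>" "\<gamma> < 1"
    and rzero: "\<And>i. i > k + N \<Longrightarrow> r i = 0"
    and Hsym: "transpose hxx = hxx" "transpose huu = huu" "hux = transpose hxu"
      "\<And>j. hrx j = transpose (hxr j)" "\<And>j. hru j = transpose (hur j)"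
      "\<And>i j. hrr j i = transpose (hrr i j)"
    and Hlim: "\<And>\<rho> x u. (\<forall>i. i > k + N \<longrightarrow> \<rho> i = 0) \<Longrightarrow>
       (\<lambda>K. qfun A B Q R \<gamma> \<rho> k K K x u) \<longlonglongrightarrow>
         (1/2) * block_qf hxx hxu hxr hux huu hur hrx hru hrr N x u (\<lambda>j. \<rho> (k + j))"
  shows "(\<exists>u. \<forall>v. Jcost A B Q R \<gamma> r k xk u \<le> Jcost A B Q R \<gamma> r k xk v)
       \<and> (\<forall>u. (\<forall>v. Jcost A B Q R \<gamma> r k xk u \<le> Jcost A B Q R \<gamma> r k xk v) \<longrightarrow>
            u k = - (matrix_inv huu *v (hux *v xk + (\<Sum>j\<in>{1..N}. hur j *v r (k + j)))))"
proof -
  (* Controllability and gamma < 1 only serve to make the limit H exist, which Hlim provides;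
     of the symmetry hypotheses only those of the blocks coupling u are needed. *)
  interpret lq_cost A B Q R \<gamma>
    using Qpsd Rpd gam(1) by unfold_locales (auto simp: psd_def pd_def)
  define W where "W \<sigma> x u = 1/2 * block_qf hxx hxu hxr hux huu hur hrx hru hrr N x u \<sigma>" for \<sigma> x u
  interpret lq_block_limit A B Q R \<gamma> W N hxx hxu hxr hux huu hur hrx hru hrr
  proof unfold_locales
    fix \<sigma> :: "nat \<Rightarrow> real^'n" and x :: "real^'n" and u :: "real^'m"
    assume "\<forall>j>N. \<sigma> j = 0"
    then show "(\<lambda>K. Q_to_go \<sigma> K x u) \<longlonglongrightarrow> W \<sigma> x u"
      using Hlim[of "\<lambda>i. \<sigma> (i - k)" x u] by (simp add: W_def qfun_eq_Q_to_go)
  qed (use Hsym W_def in auto)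
  show ?thesis
    using Jcost_optimal_first_control[of k r xk] rzero by (simp add: optimal_control_def)
qed

end
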